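(* Let $G$ be a finite subgroup of $\mathrm{PGL}_2(\mathbb{Q})$. Then $\mathcal{O}$ is infinite if and only if there exist $a,b\in\mathbb{Q}$ with $a^2\neq b^2$ such that $G$ is a subgroup of $$\left\{I,\ \begin{pmatrix}0&1\\1&0\end{pmatrix},\ \begin{pmatrix}a&b\\-b&-a\end{pmatrix},\ \begin{pmatrix}b&a\\-a&-b\end{pmatrix}\right\}\subset\mathrm{PGL}_2(\mathbb{Q}).$$
   Context: Elements $\sigma=\begin{pmatrix}a&b\\c&d\end{pmatrix}\in\mathrm{PGL}_2(\mathbb{Q})$ (matrices up to nonzero scalars) act on $\hat{\mathbb{C}}=\mathbb{C}\cup\{\infty\}$ as Möbius transformations $\sigma(z)=\frac{az+b}{cz+d}$. $\mathcal{O}$ is the set of those orbits $O$ of $G$ acting on $\hat{\mathbb{C}}$ such that every $z\in O$ satisfies $z=0$ or $|z|=1$. *)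

theory Defs
  imports Complex_Main
begin

text \<open>A rational 2x2 matrix (a b; c d) is encoded as the tuple (a, b, c, d).
  A subgroup of PGL_2(Q) is encoded by its full preimage in GL_2(Q): a set of
  nonsingular matrices containing all nonzero scalar matrices and closed under
  products and inverses.\<close>

type_synonym mat2 = "rat \<times> rat \<times> rat \<times> rat"

fun det2 :: "mat2 \<Rightarrow> rat" where
  "det2 (a, b, c, d) = a * d - b * c"

fun mmul2 :: "mat2 \<Rightarrow> mat2 \<Rightarrow> mat2" where
  "mmul2 (a, b, c, d) (a', b', c', d') =
     (a * a' + b * c', a * b' + b * d', c * a' + d * c', c * b' + d * d')"

fun minv2 :: "mat2 \<Rightarrow> mat2" where
  "minv2 (a, b, c, d) = (let e = a * d - b * c in (d / e, - b / e, - c / e, a / e))"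

fun smul2 :: "rat \<Rightarrow> mat2 \<Rightarrow> mat2" where
  "smul2 t (a, b, c, d) = (t * a, t * b, t * c, t * d)"

definition scalar2 :: "rat \<Rightarrow> mat2" where
  "scalar2 t = (t, 0, 0, t)"

definition proj_eq :: "mat2 \<Rightarrow> mat2 \<Rightarrow> bool" where
  "proj_eq M N \<longleftrightarrow> (\<exists>t. t \<noteq> 0 \<and> M = smul2 t N)"

definition proj_rel :: "(mat2 \<times> mat2) set" where
  "proj_rel = {(M, N). proj_eq M N}"

definition pgl2_subgroup :: "mat2 set \<Rightarrow> bool" where
  "pgl2_subgroup S \<longleftrightarrow>
     (\<forall>M\<in>S. det2 M \<noteq> 0) \<and>
     (\<forall>t. t \<noteq> 0 \<longrightarrow> scalar2 t \<in> S) \<and>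
     (\<forall>M\<in>S. \<forall>N\<in>S. mmul2 M N \<in> S) \<and>
     (\<forall>M\<in>S. minv2 M \<in> S)"

definition finite_pgl2_subgroup :: "mat2 set \<Rightarrow> bool" where
  "finite_pgl2_subgroup S \<longleftrightarrow> pgl2_subgroup S \<and> finite (S // proj_rel)"

text \<open>The Riemann sphere: None is the point at infinity.\<close>
type_synonym sphere = "complex option"

fun moebius :: "mat2 \<Rightarrow> sphere \<Rightarrow> sphere" where
  "moebius (a, b, c, d) None =
     (if c = 0 then None else Some (of_rat a / of_rat c))"
| "moebius (a, b, c, d) (Some z) =
     (if of_rat c * z + of_rat d = 0 then None
      else Some ((of_rat a * z + of_rat b) / (of_rat c * z + of_rat d)))"

definition orbit :: "mat2 set \<Rightarrow> sphere \<Rightarrow> sphere set" where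
  "orbit S z = (\<lambda>M. moebius M z) ` S"

text \<open>The set \<O> of orbits all of whose points are 0 or lie on the unit circle.\<close>
definition unit_orbits :: "mat2 set \<Rightarrow> sphere set set" where
  "unit_orbits S = {orbit S z | z. \<forall>w\<in>orbit S z.
      w = Some 0 \<or> (\<exists>u. w = Some u \<and> cmod u = 1)}"

end

theory Submission
  imports Defs
begin

text \<open>If \<open>\<O>\<close> is infinite, infinitely many points of the unit circle have their whole
  orbit on the circle or at 0. A matrix \<open>(a, b, c, d)\<close> of \<open>S\<close> then satisfies
  \<open>|aw + b| = |cw + d|\<close> for infinitely many \<open>w\<close> on the circle; comparing the
  coefficients of \<open>Re w\<close> forces it to be symmetric \<open>(p, q, q, p)\<close> or antisymmetric
  \<open>(p, q, -q, -p)\<close>. A symmetric element has eigenvalues \<open>p \<plusminus> q\<close>, and finiteness of the group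
  forces \<open>|p + q| = |p - q|\<close>, so it is projectively the identity or the swap. The product of
  two antisymmetric elements is symmetric, which pins every antisymmetric element to one of
  two matrices. Conversely, the four matrices preserve the unit circle, so every point of the
  circle has a finite orbit in \<open>\<O>\<close>, and infinitely many points need infinitely many orbits.\<close>

definition circle_or_zero :: "sphere \<Rightarrow> bool" where
  "circle_or_zero v \<longleftrightarrow> v = Some 0 \<or> (\<exists>u. v = Some u \<and> cmod u = 1)"

definition klein2 :: "rat \<Rightarrow> rat \<Rightarrow> mat2 set" where
  "klein2 a b = {(1, 0, 0, 1), (0, 1, 1, 0), (a, b, -b, -a), (b, a, -a, -b)}"

lemma of_rat_complex_eq: "(of_rat q :: complex) = of_real (of_rat q)"
  by (simp add: of_rat_def)

lemma moebius_smul2: "t \<noteq> 0 \<Longrightarrow> moebius (smul2 t N) z = moebius N z"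
proof -
  assume t: "t \<noteq> 0"
  obtain a b c d where N: "N = (a, b, c, d)" by (cases N) auto
  have "(of_rat t :: complex) \<noteq> 0" using t by simp
  moreover have "of_rat (t * c) * w + of_rat (t * d) = of_rat t * (of_rat c * w + of_rat d)"
    "of_rat (t * a) * w + of_rat (t * b) = of_rat t * (of_rat a * w + of_rat b)" for w :: complex
    by (simp_all add: of_rat_mult algebra_simps)
  ultimately show ?thesis by (cases z) (simp_all add: N of_rat_mult)
qed

lemma moebius_proj_eq: "proj_eq M N \<Longrightarrow> moebius M z = moebius N z"
  unfolding proj_eq_def using moebius_smul2 by blast

lemma moebius_identity: "moebius (1, 0, 0, 1) z = z"
  by (cases z) auto

lemma proj_eq_refl: "proj_eq M M"
  unfolding proj_eq_def by (cases M) (auto intro!: exI[of _ 1])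

lemma pgl2_subgroup_identity: "pgl2_subgroup S \<Longrightarrow> (1, 0, 0, 1) \<in> S"
  unfolding pgl2_subgroup_def scalar2_def by force

lemma pgl2_subgroup_det: "pgl2_subgroup S \<Longrightarrow> M \<in> S \<Longrightarrow> det2 M \<noteq> 0"
  unfolding pgl2_subgroup_def by blast

lemma pgl2_subgroup_mmul2: "pgl2_subgroup S \<Longrightarrow> M \<in> S \<Longrightarrow> N \<in> S \<Longrightarrow> mmul2 M N \<in> S"
  unfolding pgl2_subgroup_def by blast

lemma orbit_refl: "pgl2_subgroup S \<Longrightarrow> z \<in> orbit S z"
  unfolding orbit_def using pgl2_subgroup_identity moebius_identity by (metis image_eqI)

lemma norm_affine_on_circle_sq:
  fixes x y :: real
  assumes "cmod w = 1"
  shows "(cmod (of_real x * w + of_real y))\<^sup>2 = x\<^sup>2 + y\<^sup>2 + 2 * x * y * Re w"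
proof -
  have circle: "(Re w)\<^sup>2 + (Im w)\<^sup>2 = 1" using assms cmod_power2[of w] by simp
  have "(x * Re w + y)\<^sup>2 + (x * Im w)\<^sup>2 = x\<^sup>2 * ((Re w)\<^sup>2 + (Im w)\<^sup>2) + y\<^sup>2 + 2 * x * y * Re w"
    by (simp add: power2_eq_square algebra_simps)
  then show ?thesis unfolding cmod_power2 circle by simp
qed

lemma norm_affine_swap_on_circle:
  fixes x y :: real
  assumes "cmod w = 1"
  shows "cmod (of_real x * w + of_real y) = cmod (of_real y * w + of_real x)"
proof -
  have "(cmod (of_real x * w + of_real y))\<^sup>2 = (cmod (of_real y * w + of_real x))\<^sup>2"
    unfolding norm_affine_on_circle_sq[OF assms] by (simp add: algebra_simps)
  then show ?thesis by simp
qed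

lemma infinite_unit_circle: "infinite {w :: complex. cmod w = 1}"
proof
  assume fin: "finite {w :: complex. cmod w = 1}"
  define g where "g x = Complex x (sqrt (1 - x\<^sup>2))" for x :: real
  have "g ` {0..1} \<subseteq> {w. cmod w = 1}"
    by (auto simp: g_def cmod_def power_le_one)
  then have "finite (g ` {0..1})" using fin finite_subset by blast
  moreover have "inj_on g {0..1}" unfolding inj_on_def g_def by simp
  ultimately have "finite {0..1 :: real}" by (rule finite_imageD)
  then show False using infinite_Icc[of "0 :: real" 1] by simp
qed

lemma unit_circle_same_Re: "cmod w' = 1 \<Longrightarrow> {w. cmod w = 1 \<and> Re w = Re w'} \<subseteq> {w', cnj w'}"
proof
  fix w assume w': "cmod w' = 1" and "w \<in> {w. cmod w = 1 \<and> Re w = Re w'}"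
  then have "Re w = Re w'" "(Im w)\<^sup>2 = (Im w')\<^sup>2"
    using cmod_power2[of w] cmod_power2[of w'] by auto
  then show "w \<in> {w', cnj w'}" by (auto simp: power2_eq_iff complex_eq_iff)
qed

lemma infinite_circle_subset_distinct_Re:
  assumes Z: "infinite Z" "Z \<subseteq> {w. cmod w = 1}"
  obtains w1 w2 where "w1 \<in> Z" "w2 \<in> Z" "Re w1 \<noteq> Re w2"
proof -
  obtain w1 where w1: "w1 \<in> Z" using infinite_imp_nonempty[OF Z(1)] by blast
  have "{w. cmod w = 1 \<and> Re w = Re w1} \<subseteq> {w1, cnj w1}"
    using unit_circle_same_Re w1 Z(2) by blast
  then have "finite {w. cmod w = 1 \<and> Re w = Re w1}" by (rule finite_subset) simp
  then have "infinite (Z - {w. cmod w = 1 \<and> Re w = Re w1})" using Z(1) by simp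
  then obtain w2 where "w2 \<in> Z - {w. cmod w = 1 \<and> Re w = Re w1}"
    using infinite_imp_nonempty by blast
  then show thesis using that w1 Z(2) by blast
qed

lemma moebius_antisym_on_circle:
  fixes a b :: rat
  assumes ab: "a\<^sup>2 \<noteq> b\<^sup>2" and w: "cmod w = 1"
  shows "\<exists>u. moebius (a, b, -b, -a) (Some w) = Some u \<and> cmod u = 1"
proof -
  define x y where "x = real_of_rat a" and "y = real_of_rat b"
  have xy: "x\<^sup>2 \<noteq> y\<^sup>2"
    using ab unfolding x_def y_def of_rat_power[symmetric] of_rat_eq_iff .
  have num: "of_rat a * w + of_rat b = of_real x * w + of_real y"
    and den: "of_rat (-b) * w + of_rat (-a) = - (of_real y * w + of_real x)"
    by (simp_all add: of_rat_complex_eq x_def y_def of_rat_minus)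
  have "of_real y * w + of_real x \<noteq> 0"
  proof
    assume "of_real y * w + of_real x = 0"
    then have "cmod (of_real y * w) = cmod (- of_real x)" by (simp add: add_eq_0_iff)
    then have "\<bar>y\<bar> = \<bar>x\<bar>" using w by (simp add: norm_mult)
    then show False using xy power2_abs by metis
  qed
  moreover have "cmod ((of_real x * w + of_real y) / (of_real y * w + of_real x)) = 1"
    using calculation unfolding norm_divide norm_affine_swap_on_circle[OF w, of x y] by simp
  ultimately show ?thesis
    by (intro exI[of _ "(of_real x * w + of_real y) / - (of_real y * w + of_real x)"])
      (simp only: moebius.simps num den neg_equal_0_iff_equal if_False
        divide_minus_right norm_minus_cancel simp_thms)
qed

lemma moebius_klein2_on_circle:
  assumes "a\<^sup>2 \<noteq> b\<^sup>2" "cmod w = 1" "N \<in> klein2 a b"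
  shows "circle_or_zero (moebius N (Some w))"
proof -
  have "b\<^sup>2 \<noteq> a\<^sup>2" "w \<noteq> 0" using assms(1,2) by auto
  then show ?thesis
    using assms moebius_antisym_on_circle[OF assms(1,2)] moebius_antisym_on_circle[of b a w]
    by (auto simp: klein2_def circle_or_zero_def norm_divide)
qed

lemma infinite_unit_orbits_if_finite_orbits:
  assumes S: "pgl2_subgroup S" and finite_orbit: "\<And>z. finite (orbit S z)"
    and circle: "\<And>w M. cmod w = 1 \<Longrightarrow> M \<in> S \<Longrightarrow> circle_or_zero (moebius M (Some w))"
  shows "infinite (unit_orbits S)"
proof
  assume "finite (unit_orbits S)"
  then have "finite (\<Union>(unit_orbits S))"
    using finite_orbit unfolding unit_orbits_def by auto
  moreover have "Some ` {w. cmod w = 1} \<subseteq> \<Union>(unit_orbits S)"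
  proof
    fix z assume "z \<in> Some ` {w. cmod w = 1}"
    then obtain w where w: "z = Some w" "cmod w = 1" by blast
    then have "\<forall>v\<in>orbit S z. circle_or_zero v"
      using circle unfolding orbit_def by blast
    then have "orbit S z \<in> unit_orbits S"
      unfolding unit_orbits_def circle_or_zero_def by blast
    then show "z \<in> \<Union>(unit_orbits S)" using orbit_refl[OF S, of z] by blast
  qed
  ultimately have "finite (Some ` {w :: complex. cmod w = 1})" by (rule finite_subset[rotated])
  then have "finite {w :: complex. cmod w = 1}" using finite_imageD inj_Some by blast
  then show False using infinite_unit_circle by blast
qed

lemma infinite_unit_orbits_if_klein2:
  assumes S: "pgl2_subgroup S" and ab: "a\<^sup>2 \<noteq> b\<^sup>2"
    and klein: "\<forall>M\<in>S. \<exists>N\<in>klein2 a b. proj_eq M N"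
  shows "infinite (unit_orbits S)"
proof (rule infinite_unit_orbits_if_finite_orbits[OF S])
  show "finite (orbit S z)" for z
  proof (rule finite_subset)
    show "orbit S z \<subseteq> (\<lambda>N. moebius N z) ` klein2 a b"
      unfolding orbit_def using klein moebius_proj_eq by fastforce
  qed (simp add: klein2_def)
  show "circle_or_zero (moebius M (Some w))" if "cmod w = 1" "M \<in> S" for w M
  proof -
    obtain N where "N \<in> klein2 a b" "proj_eq M N" using klein \<open>M \<in> S\<close> by blast
    then show ?thesis using moebius_proj_eq moebius_klein2_on_circle[OF ab \<open>cmod w = 1\<close>] by simp
  qed
qed

lemma finite_affine_zeros:
  fixes a b :: "'a :: field"
  assumes "a \<noteq> 0 \<or> b \<noteq> 0"
  shows "finite {w. a * w + b = 0}"
proof (rule finite_subset)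
  show "{w. a * w + b = 0} \<subseteq> {- b / a}"
    using assms by (cases "a = 0") (auto simp: field_simps add_eq_0_iff)
qed simp

lemma norm_eq_if_moebius_circle_or_zero:
  assumes "circle_or_zero (moebius (a, b, c, d) (Some w))" "of_rat a * w + of_rat b \<noteq> 0"
  shows "cmod (of_rat a * w + of_rat b) = cmod (of_rat c * w + of_rat d)"
  using assms by (auto simp: circle_or_zero_def norm_divide split: if_splits)

lemma norm_eq_on_circle_coeffs:
  fixes a b c d :: rat
  assumes w: "cmod w = 1"
    and eq: "cmod (of_rat a * w + of_rat b) = cmod (of_rat c * w + of_rat d)"
  shows "of_rat (a\<^sup>2 + b\<^sup>2 - c\<^sup>2 - d\<^sup>2) + of_rat (2 * (a * b - c * d)) * Re w = 0"
proof -
  have "(cmod (of_rat a * w + of_rat b))\<^sup>2 = (cmod (of_rat c * w + of_rat d))\<^sup>2"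
    using eq by simp
  then show ?thesis
    unfolding of_rat_complex_eq norm_affine_on_circle_sq[OF w]
    by (simp add: of_rat_add of_rat_diff of_rat_mult of_rat_power algebra_simps)
qed

lemma swap_or_neg_swap_if_norm_eqs:
  fixes a b c d :: rat
  assumes det: "a * d - b * c \<noteq> 0"
    and sq: "a\<^sup>2 + b\<^sup>2 = c\<^sup>2 + d\<^sup>2" and prod: "a * b = c * d"
  shows "(c = b \<and> d = a) \<or> (c = -b \<and> d = -a)"
proof -
  have "(a + b)\<^sup>2 = (c + d)\<^sup>2" "(a - b)\<^sup>2 = (c - d)\<^sup>2"
    using sq prod by (simp_all add: power2_eq_square algebra_simps)
  then have "a + b = c + d \<or> a + b = - (c + d)" "a - b = c - d \<or> a - b = - (c - d)"
    by (simp_all add: power2_eq_iff)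
  then have "(c = a \<and> d = b) \<or> (c = b \<and> d = a) \<or> (c = -b \<and> d = -a) \<or> (c = -a \<and> d = -b)"
    by (elim disjE) simp_all
  then show ?thesis using det by (auto simp: mult.commute)
qed

lemma circle_preserving_shape:
  fixes a b c d :: rat
  assumes det: "a * d - b * c \<noteq> 0"
    and Z: "infinite Z" "Z \<subseteq> {w. cmod w = 1}"
    and preserves: "\<forall>w\<in>Z. circle_or_zero (moebius (a, b, c, d) (Some w))"
  shows "(c = b \<and> d = a) \<or> (c = -b \<and> d = -a)"
proof -
  define Z' where "Z' = Z - {w. of_rat a * w + of_rat b = 0}"
  have "a \<noteq> 0 \<or> b \<noteq> 0" using det by auto
  then have "infinite Z'"
    unfolding Z'_def using Z(1) finite_affine_zeros[of "of_rat a :: complex" "of_rat b"] by simp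
  moreover have "Z' \<subseteq> {w. cmod w = 1}" using Z(2) unfolding Z'_def by blast
  ultimately obtain w1 w2 where w12: "w1 \<in> Z'" "w2 \<in> Z'" "Re w1 \<noteq> Re w2"
    by (rule infinite_circle_subset_distinct_Re)
  have linear: "of_rat (a\<^sup>2 + b\<^sup>2 - c\<^sup>2 - d\<^sup>2) + of_rat (2 * (a * b - c * d)) * Re w = 0"
    if "w \<in> Z'" for w
    using that Z(2) preserves norm_eq_if_moebius_circle_or_zero norm_eq_on_circle_coeffs
    unfolding Z'_def by blast
  have "real_of_rat (2 * (a * b - c * d)) = 0"
    using linear[OF w12(1)] linear[OF w12(2)] w12(3) by (metis add_left_cancel mult_cancel_left)
  moreover then have "real_of_rat (a\<^sup>2 + b\<^sup>2 - c\<^sup>2 - d\<^sup>2) = 0"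
    using linear[OF w12(1)] by simp
  ultimately show ?thesis
    using swap_or_neg_swap_if_norm_eqs[OF det] by simp
qed

text \<open>The symmetric matrix with eigenvalue \<open>u\<close> on \<open>(1, 1)\<close> and \<open>v\<close> on \<open>(1, -1)\<close>.\<close>
definition sym_mat2 :: "rat \<Rightarrow> rat \<Rightarrow> mat2" where
  "sym_mat2 u v = ((u + v) / 2, (u - v) / 2, (u - v) / 2, (u + v) / 2)"

lemma mmul2_sym_mat2: "mmul2 (sym_mat2 u v) (sym_mat2 u' v') = sym_mat2 (u * u') (v * v')"
  by (simp add: sym_mat2_def field_simps)

lemma sym_mat2_pq: "(p, q, q, p) = sym_mat2 (p + q) (p - q)"
  by (simp add: sym_mat2_def)

lemma sym_mat2_power_in_subgroup:
  assumes "pgl2_subgroup S" "sym_mat2 u v \<in> S"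
  shows "sym_mat2 (u ^ k) (v ^ k) \<in> S"
proof (induction k)
  case 0
  then show ?case using pgl2_subgroup_identity[OF assms(1)] by (simp add: sym_mat2_def)
next
  case (Suc k)
  then show ?case
    using pgl2_subgroup_mmul2[OF assms] mmul2_sym_mat2[of u v] by (metis power_Suc)
qed

lemma proj_eq_sym_mat2_imp:
  assumes "proj_eq (sym_mat2 u v) (sym_mat2 u' v')"
  shows "u * v' = u' * v"
proof -
  obtain t where "sym_mat2 u v = smul2 t (sym_mat2 u' v')"
    using assms unfolding proj_eq_def by blast
  then have "u + v = t * (u' + v')" "u - v = t * (u' - v')"
    by (simp_all add: sym_mat2_def field_simps)
  then have "u = t * u'" "v = t * v'" by (simp_all add: algebra_simps)
  then show ?thesis by simp
qed

lemma sym_mat2_finite_order: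
  assumes S: "pgl2_subgroup S" and fin: "finite (S // proj_rel)"
    and M: "sym_mat2 u v \<in> S" and uv: "u \<noteq> 0" "v \<noteq> 0"
  shows "\<bar>u\<bar> = \<bar>v\<bar>"
proof (rule ccontr)
  assume "\<bar>u\<bar> \<noteq> \<bar>v\<bar>"
  then have r: "\<bar>u / v\<bar> \<noteq> 1" "\<bar>u / v\<bar> > 0" using uv by auto
  define cls where "cls k = proj_rel `` {sym_mat2 (u ^ k) (v ^ k)}" for k
  have "inj cls"
  proof (rule injI)
    fix k m assume "cls k = cls m"
    then have "(sym_mat2 (u ^ k) (v ^ k), sym_mat2 (u ^ m) (v ^ m)) \<in> proj_rel"
      using proj_eq_refl unfolding cls_def proj_rel_def by blast
    then have "u ^ k * v ^ m = u ^ m * v ^ k"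
      unfolding proj_rel_def using proj_eq_sym_mat2_imp by blast
    then have "\<bar>u\<bar> ^ k * \<bar>v\<bar> ^ m = \<bar>u\<bar> ^ m * \<bar>v\<bar> ^ k"
      by (metis abs_mult power_abs)
    then have "\<bar>u / v\<bar> ^ k = \<bar>u / v\<bar> ^ m"
      using uv by (simp add: divide_simps)
    then show "k = m" using power_inject_exp'[OF r] by blast
  qed
  moreover have "range cls \<subseteq> S // proj_rel"
    using sym_mat2_power_in_subgroup[OF S M] unfolding cls_def quotient_def by blast
  ultimately show False using fin finite_subset finite_imageD by (metis infinite_UNIV_nat)
qed

lemma sym_elem_proj_eq_klein:
  assumes S: "pgl2_subgroup S" and fin: "finite (S // proj_rel)"
    and M: "(p, q, q, p) \<in> S"
  shows "proj_eq (p, q, q, p) (1, 0, 0, 1) \<or> proj_eq (p, q, q, p) (0, 1, 1, 0)"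
proof -
  have "p\<^sup>2 \<noteq> q\<^sup>2" using pgl2_subgroup_det[OF S M] by (simp add: power2_eq_square)
  then have "p + q \<noteq> 0" "p - q \<noteq> 0" by (auto simp: power2_eq_iff)
  then have "\<bar>p + q\<bar> = \<bar>p - q\<bar>"
    using sym_mat2_finite_order[OF S fin] M unfolding sym_mat2_pq by blast
  then have "q = 0 \<and> p \<noteq> 0 \<or> p = 0 \<and> q \<noteq> 0"
    using \<open>p + q \<noteq> 0\<close> by (auto simp: abs_eq_iff)
  then show ?thesis
    unfolding proj_eq_def by (auto intro: exI[of _ p] exI[of _ q])
qed

lemma proj_eq_antisym_if_cross_eq:
  fixes a b p q :: rat
  assumes ab: "a\<^sup>2 \<noteq> b\<^sup>2" and pq: "p\<^sup>2 \<noteq> q\<^sup>2" and cross: "a * q = b * p"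
  shows "proj_eq (p, q, -q, -p) (a, b, -b, -a)"
proof -
  have s: "a\<^sup>2 + b\<^sup>2 \<noteq> 0" using ab by (auto simp: add_nonneg_eq_0_iff)
  define t where "t = (a * p + b * q) / (a\<^sup>2 + b\<^sup>2)"
  have "p * (a\<^sup>2 + b\<^sup>2) = a * (a * p + b * q)" "q * (a\<^sup>2 + b\<^sup>2) = b * (a * p + b * q)"
    using cross by (simp_all add: power2_eq_square algebra_simps)
  then have "p = t * a" "q = t * b" using s unfolding t_def by (simp_all add: field_simps)
  moreover have "t \<noteq> 0" using calculation pq by auto
  ultimately show ?thesis unfolding proj_eq_def by (intro exI[of _ t]) simp
qed

lemma antisym_elem_proj_eq_klein:
  assumes S: "pgl2_subgroup S" and fin: "finite (S // proj_rel)"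
    and A: "(a, b, -b, -a) \<in> S" and M: "(p, q, -q, -p) \<in> S"
  shows "proj_eq (p, q, -q, -p) (a, b, -b, -a) \<or> proj_eq (p, q, -q, -p) (b, a, -a, -b)"
proof -
  have ab: "a\<^sup>2 \<noteq> b\<^sup>2" and pq: "p\<^sup>2 \<noteq> q\<^sup>2"
    using pgl2_subgroup_det[OF S A] pgl2_subgroup_det[OF S M] by (auto simp: power2_eq_square)
  define P Q where "P = a * p - b * q" and "Q = a * q - b * p"
  have "mmul2 (a, b, -b, -a) (p, q, -q, -p) = (P, Q, Q, P)"
    unfolding P_def Q_def by (simp add: algebra_simps)
  then have "(P, Q, Q, P) \<in> S" using pgl2_subgroup_mmul2[OF S A M] by simp
  then have "Q = 0 \<or> P = 0"
    using sym_elem_proj_eq_klein[OF S fin] unfolding proj_eq_def by auto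
  moreover have "b\<^sup>2 \<noteq> a\<^sup>2" using ab by simp
  ultimately show ?thesis
    using proj_eq_antisym_if_cross_eq[OF ab pq] proj_eq_antisym_if_cross_eq[of b a p q] pq
    unfolding P_def Q_def by auto
qed

lemma infinite_circle_points_if_infinite_unit_orbits:
  assumes S: "pgl2_subgroup S" and inf: "infinite (unit_orbits S)"
  shows "infinite {w. cmod w = 1 \<and> (\<forall>M\<in>S. circle_or_zero (moebius M (Some w)))}"
    (is "infinite ?Z")
proof
  assume "finite ?Z"
  moreover have "unit_orbits S \<subseteq> (\<lambda>w. orbit S (Some w)) ` insert 0 ?Z"
  proof
    fix Ob assume "Ob \<in> unit_orbits S"
    then obtain z where Ob: "Ob = orbit S z" "\<forall>v\<in>Ob. circle_or_zero v"
      unfolding unit_orbits_def circle_or_zero_def by auto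
    then have "circle_or_zero z" using orbit_refl[OF S, of z] by blast
    then obtain w where w: "z = Some w" "w = 0 \<or> cmod w = 1"
      unfolding circle_or_zero_def by auto
    then have "w \<in> insert 0 ?Z" using Ob unfolding orbit_def by auto
    then show "Ob \<in> (\<lambda>w. orbit S (Some w)) ` insert 0 ?Z" using Ob(1) w(1) by blast
  qed
  ultimately show False using inf by (meson finite_imageI finite_insert finite_subset)
qed

lemma elem_shape_if_infinite_unit_orbits:
  assumes S: "pgl2_subgroup S" and inf: "infinite (unit_orbits S)" and M: "M \<in> S"
  obtains p q where "M = (p, q, q, p) \<or> M = (p, q, -q, -p)"
proof -
  obtain a b c d where abcd: "M = (a, b, c, d)" by (cases M) auto
  let ?Z = "{w. cmod w = 1 \<and> (\<forall>M\<in>S. circle_or_zero (moebius M (Some w)))}"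
  have "a * d - b * c \<noteq> 0" using pgl2_subgroup_det[OF S M] by (simp add: abcd)
  moreover have "?Z \<subseteq> {w. cmod w = 1}" "\<forall>w\<in>?Z. circle_or_zero (moebius (a, b, c, d) (Some w))"
    using M unfolding abcd by auto
  ultimately have "(c = b \<and> d = a) \<or> (c = -b \<and> d = -a)"
    using circle_preserving_shape infinite_circle_points_if_infinite_unit_orbits[OF S inf] by blast
  then show thesis using that abcd by blast
qed

lemma klein2_if_infinite_unit_orbits:
  assumes fS: "finite_pgl2_subgroup S" and inf: "infinite (unit_orbits S)"
  shows "\<exists>a b. a\<^sup>2 \<noteq> b\<^sup>2 \<and> (\<forall>M\<in>S. \<exists>N\<in>klein2 a b. proj_eq M N)"
proof -
  have S: "pgl2_subgroup S" and fin: "finite (S // proj_rel)"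
    using fS unfolding finite_pgl2_subgroup_def by auto
  have sym: "\<exists>N\<in>klein2 a b. proj_eq (p, q, q, p) N" if "(p, q, q, p) \<in> S" for a b p q
    using sym_elem_proj_eq_klein[OF S fin that] unfolding klein2_def by blast
  show ?thesis
  proof (cases "\<exists>a b. (a, b, -b, -a) \<in> S")
    case True
    then obtain a b where A: "(a, b, -b, -a) \<in> S" by blast
    have "a\<^sup>2 \<noteq> b\<^sup>2" using pgl2_subgroup_det[OF S A] by (auto simp: power2_eq_square)
    moreover have "\<exists>N\<in>klein2 a b. proj_eq M N" if M: "M \<in> S" for M
    proof -
      obtain p q where "M = (p, q, q, p) \<or> M = (p, q, -q, -p)"
        using elem_shape_if_infinite_unit_orbits[OF S inf M] by blast
      then show ?thesis
      proof
        assume "M = (p, q, -q, -p)"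
        then show ?thesis
          using antisym_elem_proj_eq_klein[OF S fin A] M unfolding klein2_def by blast
      qed (use sym M in blast)
    qed
    ultimately show ?thesis by blast
  next
    case False
    have "\<exists>N\<in>klein2 1 0. proj_eq M N" if M: "M \<in> S" for M
    proof -
      obtain p q where "M = (p, q, q, p) \<or> M = (p, q, -q, -p)"
        using elem_shape_if_infinite_unit_orbits[OF S inf M] by blast
      then have "M = (p, q, q, p)" using False M by blast
      then show ?thesis using sym M by blast
    qed
    then show ?thesis by (intro exI[of _ 1] exI[of _ 0]) simp
  qed
qed

theorem mainTheorem4:
  assumes "finite_pgl2_subgroup S"
  shows "infinite (unit_orbits S) \<longleftrightarrow>
    (\<exists>a b :: rat. a\<^sup>2 \<noteq> b\<^sup>2 \<and>
       (\<forall>M\<in>S. \<exists>N\<in>{(1, 0, 0, 1), (0, 1, 1, 0), (a, b, -b, -a), (b, a, -a, -b)}.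
          proj_eq M N))"
proof -
  have "pgl2_subgroup S" using assms unfolding finite_pgl2_subgroup_def by blast
  then have "infinite (unit_orbits S) \<longleftrightarrow>
      (\<exists>a b. a\<^sup>2 \<noteq> b\<^sup>2 \<and> (\<forall>M\<in>S. \<exists>N\<in>klein2 a b. proj_eq M N))"
    using klein2_if_infinite_unit_orbits[OF assms] infinite_unit_orbits_if_klein2 by blast
  then show ?thesis unfolding klein2_def .
qed

end
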